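(* Let $C_\#$ be the bivariate copula with density \[ c_\#(u,v)=2\big(\mathbf{1}_{[0,\frac12)}(u)\mathbf{1}_{[\frac12,1]}(v)+\mathbf{1}_{[\frac12,1]}(u)\mathbf{1}_{[0,\frac12)}(v)\big). \] Then $\psi(C_\#)=-\frac12$ and $\xi(C_\#)=\frac12$. Moreover, for every bivariate copula $C$ with $\psi(C)=-\frac12$ one has $\xi(C)\ge\frac12$, with equality if and only if $C=C_\#$.
   Context: For a bivariate copula $C$: $\xi(C)=6\int_0^1\int_0^1(\partial_1C(u,v))^2\,du\,dv-2$ and $\psi(C)=6\int_0^1C(u,u)\,du-2$; $-\frac12$ is the smallest possible value of $\psi$ over all copulas. *)

theory Defs
  imports "HOL-Analysis.Analysis"
begin

text \<open>A bivariate copula, represented by its values on the unit square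
  (values outside [0,1]^2 are irrelevant).\<close>
definition is_copula :: "(real \<Rightarrow> real \<Rightarrow> real) \<Rightarrow> bool" where
  "is_copula C \<longleftrightarrow>
     (\<forall>u\<in>{0..1}. C u 0 = 0 \<and> C 0 u = 0 \<and> C u 1 = u \<and> C 1 u = u) \<and>
     (\<forall>u1 u2 v1 v2. 0 \<le> u1 \<and> u1 \<le> u2 \<and> u2 \<le> 1 \<and> 0 \<le> v1 \<and> v1 \<le> v2 \<and> v2 \<le> 1 \<longrightarrow>
        C u2 v2 - C u2 v1 - C u1 v2 + C u1 v1 \<ge> 0)"

text \<open>Partial derivative in the first argument (exists almost everywhere;
  set to 0 where it does not exist).\<close>
definition partial1 :: "(real \<Rightarrow> real \<Rightarrow> real) \<Rightarrow> real \<Rightarrow> real \<Rightarrow> real" where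
  "partial1 C u v = (if (\<lambda>x. C x v) differentiable (at u) then deriv (\<lambda>x. C x v) u else 0)"

definition xi :: "(real \<Rightarrow> real \<Rightarrow> real) \<Rightarrow> real" where
  "xi C = 6 * (LBINT v:{0..1}. LBINT u:{0..1}. (partial1 C u v)^2) - 2"

definition psi :: "(real \<Rightarrow> real \<Rightarrow> real) \<Rightarrow> real" where
  "psi C = 6 * (LBINT u:{0..1}. C u u) - 2"

definition csharp_density :: "real \<Rightarrow> real \<Rightarrow> real" where
  "csharp_density u v = 2 * (indicator {0..<1/2} u * indicator {1/2..1} v
                            + indicator {1/2..1} u * indicator {0..<1/2} v)"

definition Csharp :: "real \<Rightarrow> real \<Rightarrow> real" where
  "Csharp u v = (LBINT s:{0..u}. LBINT t:{0..v}. csharp_density s t)"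

end

theory Submission
  imports Defs
begin

text \<open>
  A copula \<open>C\<close> lies above the lower Frechet bound, which on the diagonal is
  \<open>max 0 (2 u - 1)\<close> and has \<open>\<psi> = -1/2\<close>. Hence \<open>\<psi> C = -1/2\<close> forces
  \<open>C u u = max 0 (2 u - 1)\<close>, so \<open>C (1/2) (1/2) = 0\<close> and \<open>C (1/2) v = max 0 (v - 1/2)\<close>.
  Each section \<open>x \<mapsto> C x v\<close> is monotone and 1-Lipschitz, hence differentiable almost
  everywhere (Lebesgue's theorem, proved here with Vitali covers) with
  \<open>\<integral>\<^sub>a\<^sup>b \<partial>\<^sub>1C = C b v - C a v\<close>. Cauchy--Schwarz on \<open>[0, 1/2]\<close> and \<open>[1/2, 1]\<close>,
  knowing the section at \<open>0\<close>, \<open>1/2\<close> and \<open>1\<close>, bounds \<open>\<integral>\<^sub>0\<^sup>1 (\<partial>\<^sub>1C)\<^sup>2\<close> from below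
  by a function of \<open>v\<close> whose integral is \<open>5/12\<close>; that is, \<open>\<xi> C \<ge> 1/2\<close>. Equality makes
  almost every section piecewise affine with these values, which is exactly \<open>C\<^sub>#\<close>, and
  continuity in \<open>v\<close> gives \<open>C = C\<^sub>#\<close>.
\<close>

lemma set_integral_const_Icc: "a \<le> b \<Longrightarrow> (LBINT u:{a..b::real}. (c::real)) = c * (b - a)"
  by (subst set_integral_const) auto

lemma set_integrable_continuous_Icc:
  fixes f :: "real \<Rightarrow> real"
  shows "continuous_on {a..b} f \<Longrightarrow> set_integrable lborel {a..b} f"
  unfolding set_integrable_def by (rule borel_integrable_compact) auto

lemma set_integral_split_Icc:
  fixes f :: "real \<Rightarrow> real"
  assumes "set_integrable lborel {a..c} f" "a \<le> b" "b \<le> c"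
  shows "(LBINT u:{a..c}. f u) = (LBINT u:{a..b}. f u) + (LBINT u:{b..c}. f u)"
proof -
  have "set_integrable lborel (einterval a c) f"
    by (rule set_integrable_subset[OF assms(1)]) auto
  then have "interval_lebesgue_integrable lborel (ereal a) (ereal c) f"
    unfolding interval_lebesgue_integrable_def using assms(2,3) by simp
  then have "(LBINT u=a..b. f u) + (LBINT u=b..c. f u) = (LBINT u=a..c. f u)"
    using assms(2,3) by (intro interval_integral_sum) (simp add: min_def max_def)
  then show ?thesis
    using assms(2,3) by (simp add: interval_integral_Icc)
qed

lemma set_integral_Icc_FTC:
  fixes f G :: "real \<Rightarrow> real"
  assumes "a \<le> b" "continuous_on {a..b} f" "\<And>x. (G has_real_derivative f x) (at x)"
  shows "(LBINT u:{a..b}. f u) = G b - G a"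
proof -
  have "(LBINT u=a..b. f u) = G b - G a"
    using assms
    by (intro interval_integral_FTC_finite)
      (auto simp: has_real_derivative_iff_has_vector_derivative[symmetric]
        intro: has_field_derivative_at_within)
  then show ?thesis
    using assms(1) by (simp add: interval_integral_Icc)
qed

lemma set_integral_sq_const_open:
  fixes g :: "real \<Rightarrow> real"
  assumes "a < b" "\<And>u. u \<in> {a<..<b} \<Longrightarrow> g u = k"
  shows "(LBINT u:{a..b}. (g u)\<^sup>2) = k\<^sup>2 * (b - a)"
proof -
  have "(LBINT u:{a..b}. (g u)\<^sup>2) = (LBINT u:{a..b}. k\<^sup>2)"
    unfolding set_lebesgue_integral_def
    by (rule integral_discrete_difference[of "{a, b}"]) (use assms(2) in \<open>auto simp: indicator_def\<close>)
  then show ?thesis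
    using assms(1) by (simp add: set_integral_const_Icc)
qed

lemma set_integral_indicator_comb:
  assumes "A \<in> sets borel" "emeasure lborel A < \<infinity>" "B1 \<in> sets borel" "B2 \<in> sets borel"
  shows "(LBINT t:A. c1 * indicator B1 t + c2 * indicator B2 t) =
    c1 * measure lborel (A \<inter> B1) + c2 * measure lborel (A \<inter> B2)"
proof -
  have fin: "emeasure lborel (A \<inter> B) < \<infinity>" for B
    using emeasure_mono[of "A \<inter> B" A lborel] assms(1,2) by auto
  have "integrable lborel (indicat_real (A \<inter> B1))" "integrable lborel (indicat_real (A \<inter> B2))"
    using assms fin by (auto intro: integrable_real_indicator)
  moreover have "(\<lambda>t. indicator A t *\<^sub>R (c1 * indicator B1 t + c2 * indicator B2 t)) =
      (\<lambda>t. c1 * indicat_real (A \<inter> B1) t + c2 * indicat_real (A \<inter> B2) t)"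
    by (auto simp: fun_eq_iff indicator_def)
  ultimately show ?thesis
    unfolding set_lebesgue_integral_def by simp
qed

lemma AE_zero_if_set_integral_nonneg_eq_0:
  fixes f :: "real \<Rightarrow> real"
  assumes "set_integrable lborel A f" "\<And>x. x \<in> A \<Longrightarrow> 0 \<le> f x" "(LBINT x:A. f x) = 0"
  shows "AE x in lborel. x \<in> A \<longrightarrow> f x = 0"
proof -
  have "AE x in lborel. indicator A x *\<^sub>R f x = 0"
    using assms unfolding set_integrable_def set_lebesgue_integral_def
    by (subst integral_nonneg_eq_0_iff_AE[symmetric]) (auto simp: indicator_def)
  then show ?thesis
    by eventually_elim (auto simp: indicator_def)
qed

lemma continuous_AE_zero_Icc:
  fixes g :: "real \<Rightarrow> real"
  assumes "continuous_on {a..b} g" "a < b" "AE x in lborel. x \<in> {a..b} \<longrightarrow> g x = 0"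
    "x \<in> {a..b}"
  shows "g x = 0"
proof -
  have int: "set_integrable lborel {a..b} (\<lambda>x. \<bar>g x\<bar>)"
    unfolding set_integrable_def
    by (intro borel_integrable_compact continuous_intros assms(1)) auto
  have "(LBINT x:{a..b}. \<bar>g x\<bar>) = 0"
    unfolding set_lebesgue_integral_def
    by (rule integral_eq_zero_AE) (use assms(3) in \<open>auto simp: indicator_def\<close>)
  then have "integral {a..b} (\<lambda>x. \<bar>g x\<bar>) = 0"
    using set_borel_integral_eq_integral(2)[OF int] by simp
  then have "\<forall>x\<in>{a..b}. \<bar>g x\<bar> = 0"
    using assms(2) by (subst (asm) integral_eq_0_iff) (auto intro: continuous_intros assms(1))
  then show ?thesis
    using assms(4) by simp
qed

lemma emeasure_disjoint_UN_compare:
  fixes a b :: ennreal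
  assumes "countable I" "disjoint_family_on A I" "\<And>i. i \<in> I \<Longrightarrow> A i \<in> sets M"
    "sets N = sets M" "\<And>i. i \<in> I \<Longrightarrow> a * emeasure M (A i) \<le> b * emeasure N (A i)"
  shows "a * emeasure M (\<Union>i\<in>I. A i) \<le> b * emeasure N (\<Union>i\<in>I. A i)"
proof -
  have "a * emeasure M (\<Union>i\<in>I. A i) = (\<integral>\<^sup>+i. a * emeasure M (A i) \<partial>count_space I)"
    using assms(1-3) by (simp add: emeasure_UN_countable nn_integral_cmult)
  also have "\<dots> \<le> (\<integral>\<^sup>+i. b * emeasure N (A i) \<partial>count_space I)"
    using assms(5) by (intro nn_integral_mono) auto
  also have "\<dots> = b * emeasure N (\<Union>i\<in>I. A i)"
    using assms(1-4) by (simp add: emeasure_UN_countable nn_integral_cmult)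
  finally show ?thesis .
qed

lemma emeasure_lborel_mono_negligible_diff:
  assumes "negligible (S - T)" "S \<in> sets borel" "T \<in> sets borel"
  shows "emeasure lborel S \<le> emeasure lborel T"
proof -
  have "S - T \<in> null_sets lborel"
    using assms negligible_iff_null_sets null_sets_completion_iff by (metis sets.Diff sets_lborel)
  then have "emeasure lborel (T \<union> (S - T)) = emeasure lborel T"
    using assms(3) by (intro emeasure_Un_null_set) auto
  moreover have "emeasure lborel S \<le> emeasure lborel (T \<union> (S - T))"
    using assms by (intro emeasure_mono) auto
  ultimately show ?thesis by simp
qed

section \<open>Difference quotients and Dini gaps\<close>

definition diff_quot :: "(real \<Rightarrow> real) \<Rightarrow> real \<Rightarrow> real \<Rightarrow> real" where
  "diff_quot F x h = (F (x + h) - F x) / h"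

lemma diff_quot_reflect: "diff_quot F (x + h) (- h) = diff_quot F x h"
  by (simp add: diff_quot_def divide_simps)

lemma diff_quot_bounds:
  assumes "mono F" "L-lipschitz_on UNIV F" "h \<noteq> 0"
  shows "0 \<le> diff_quot F x h" "diff_quot F x h \<le> L"
proof -
  have "\<bar>F (x + h) - F x\<bar> \<le> L * \<bar>h\<bar>"
    using lipschitz_onD[OF assms(2), of "x + h" x] by (simp add: dist_real_def)
  then have "\<bar>diff_quot F x h\<bar> \<le> L"
    using assms(3) by (simp add: diff_quot_def abs_divide pos_divide_le_eq)
  then show "diff_quot F x h \<le> L" by simp
  have "0 \<le> (F (x + h) - F x) * h"
    using assms(1) by (cases "0 \<le> h") (auto intro!: mult_nonneg_nonneg mult_nonpos_nonpos simp: mono_def)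
  then show "0 \<le> diff_quot F x h"
    by (simp add: diff_quot_def zero_le_divide_iff zero_le_mult_iff)
qed

lemma has_field_derivative_iff_diff_quot:
  "(F has_field_derivative D) (at x) \<longleftrightarrow> (diff_quot F x \<longlongrightarrow> D) (at 0)"
  by (simp add: DERIV_def diff_quot_def[abs_def])

lemma diff_quot_tendsto_deriv:
  "F differentiable (at x) \<Longrightarrow> (diff_quot F x \<longlongrightarrow> deriv F x) (at 0)"
  by (simp add: DERIV_deriv_iff_real_differentiable[symmetric] has_field_derivative_iff_diff_quot)

lemma continuous_on_diff_quot:
  assumes "continuous_on UNIV F"
  shows "continuous_on (- {0}) (diff_quot F x)"
  unfolding diff_quot_def
  by (intro continuous_intros continuous_on_compose2[OF assms]) auto

definition dini_gap :: "(real \<Rightarrow> real) \<Rightarrow> real \<Rightarrow> real \<Rightarrow> real set" where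
  "dini_gap F p q =
     {x. (\<exists>\<^sub>F h in at 0. diff_quot F x h < p) \<and> (\<exists>\<^sub>F h in at 0. q < diff_quot F x h)}"

lemma differentiable_not_in_dini_gap:
  assumes "F differentiable (at x)" "p < q"
  shows "x \<notin> dini_gap F p q"
proof -
  have lim: "(diff_quot F x \<longlongrightarrow> deriv F x) (at 0)"
    using assms(1) by (rule diff_quot_tendsto_deriv)
  consider "p < deriv F x" | "deriv F x < q"
    using assms(2) by linarith
  then show ?thesis
  proof cases
    case 1
    have "\<forall>\<^sub>F h in at 0. \<not> diff_quot F x h < p"
      using order_tendstoD(1)[OF lim 1] by (rule eventually_mono) simp
    then show ?thesis by (simp add: dini_gap_def not_frequently[symmetric])
  next
    case 2
    have "\<forall>\<^sub>F h in at 0. \<not> q < diff_quot F x h"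
      using order_tendstoD(2)[OF lim 2] by (rule eventually_mono) simp
    then show ?thesis by (simp add: dini_gap_def not_frequently[symmetric])
  qed
qed

text \<open>If the lower and upper Dini derivatives (in the extended reals) differ, two rationals
  fit between them; otherwise the difference quotients converge.\<close>
lemma not_differentiable_in_dini_gap:
  assumes "mono F" "L-lipschitz_on UNIV F" "\<not> F differentiable (at x)"
  shows "\<exists>p q :: rat. p < q \<and> x \<in> dini_gap F (of_rat p) (of_rat q)"
proof -
  define g where "g h = ereal (diff_quot F x h)" for h
  define lo where "lo = Liminf (at (0::real)) g"
  define up where "up = Limsup (at (0::real)) g"
  have bounded: "\<forall>\<^sub>F h in at 0. 0 \<le> g h \<and> g h \<le> L"
    using diff_quot_bounds[OF assms(1,2)] by (auto simp: g_def eventually_at intro!: exI[of _ 1])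
  have "0 \<le> lo" "lo \<le> up" "up \<le> L"
    unfolding lo_def up_def using bounded
    by (auto intro: Liminf_bounded Limsup_bounded Liminf_le_Limsup elim: eventually_mono)
  then obtain l s where ls: "lo = ereal l" "up = ereal s" "l \<le> s"
    by (cases lo; cases up) auto
  show ?thesis
  proof (cases "l < s")
    case True
    obtain p' where p': "p' \<in> \<rat>" "l < p'" "p' < s" using Rats_dense_in_real[OF True] by auto
    obtain q' where q': "q' \<in> \<rat>" "p' < q'" "q' < s" using Rats_dense_in_real[OF p'(3)] by auto
    obtain p q where pq: "p' = of_rat p" "q' = of_rat q" using p'(1) q'(1) Rats_cases by metis
    have "\<not> ereal p' \<le> lo" using ls p' by simp
    then obtain y where "y < ereal p'" "\<exists>\<^sub>F h in at 0. \<not> y < g h"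
      unfolding lo_def le_Liminf_iff by (auto simp: not_eventually)
    then have below: "\<exists>\<^sub>F h in at 0. diff_quot F x h < p'"
      by (elim frequently_elim1) (metis g_def not_less less_ereal.simps(1) order.strict_trans2)
    have "\<not> up \<le> ereal q'" using ls q' by simp
    then obtain y where "ereal q' < y" "\<exists>\<^sub>F h in at 0. \<not> g h < y"
      unfolding up_def Limsup_le_iff by (auto simp: not_eventually)
    then have above: "\<exists>\<^sub>F h in at 0. q' < diff_quot F x h"
      by (elim frequently_elim1) (metis g_def not_less less_ereal.simps(1) order.strict_trans2)
    have "p < q" using p'(2) q'(2) pq by (simp add: of_rat_less)
    with below above pq show ?thesis by (auto simp: dini_gap_def)
  next
    case False
    then have "lo = up" using ls by simp
    then have "(g \<longlongrightarrow> ereal l) (at 0)"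
      unfolding lo_def up_def ls(1)[symmetric] by (intro Liminf_eq_Limsup) auto
    then have "(diff_quot F x \<longlongrightarrow> l) (at 0)"
      unfolding g_def lim_ereal .
    then have "(F has_field_derivative l) (at x)"
      by (simp add: has_field_derivative_iff_diff_quot)
    with assms(3) show ?thesis by (auto simp: real_differentiable_def)
  qed
qed

lemma frequently_diff_quot_iff_rat:
  assumes "continuous_on UNIV F" "open T"
  shows "(\<exists>\<^sub>F h in at 0. diff_quot F x h \<in> T) \<longleftrightarrow>
    (\<forall>n::nat. \<exists>h::rat. h \<noteq> 0 \<and> \<bar>of_rat h\<bar> < 1 / Suc n \<and> diff_quot F x (of_rat h) \<in> T)"
proof
  assume freq: "\<exists>\<^sub>F h in at 0. diff_quot F x h \<in> T"
  show "\<forall>n::nat. \<exists>h::rat. h \<noteq> 0 \<and> \<bar>of_rat h\<bar> < 1 / Suc n \<and> diff_quot F x (of_rat h) \<in> T"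
  proof
    fix n :: nat
    define N where "N = ball 0 (1 / Suc n) \<inter> (- {0} \<inter> diff_quot F x -` T)"
    have "open N"
      unfolding N_def
      by (intro open_Int open_ball continuous_open_preimage continuous_on_diff_quot assms) auto
    have "0 < 1 / real (Suc n)" by simp
    then obtain h where "h \<noteq> 0" "dist h 0 < 1 / Suc n" "diff_quot F x h \<in> T"
      using freq unfolding frequently_at by blast
    then have "h \<in> N" by (simp add: N_def dist_commute)
    with \<open>open N\<close> have "N \<inter> \<rat> \<noteq> {}"
      using open_Int_closure_eq_empty[of N \<rat>] by (auto simp: Rats_closure_real)
    then obtain r where "of_rat r \<in> N"
      by (auto elim: Rats_cases)
    then show "\<exists>h::rat. h \<noteq> 0 \<and> \<bar>of_rat h\<bar> < 1 / Suc n \<and> diff_quot F x (of_rat h) \<in> T"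
      by (intro exI[of _ r]) (simp add: N_def)
  qed
next
  assume rat: "\<forall>n::nat. \<exists>h::rat. h \<noteq> 0 \<and> \<bar>of_rat h\<bar> < 1 / Suc n \<and> diff_quot F x (of_rat h) \<in> T"
  show "\<exists>\<^sub>F h in at 0. diff_quot F x h \<in> T"
    unfolding frequently_at
  proof (intro allI impI)
    fix d :: real assume "0 < d"
    then obtain n where n: "inverse (real (Suc n)) < d"
      using reals_Archimedean by blast
    obtain h :: rat where "h \<noteq> 0" "\<bar>of_rat h\<bar> < 1 / Suc n" "diff_quot F x (of_rat h) \<in> T"
      using rat by blast
    with n show "\<exists>h\<in>UNIV. h \<noteq> 0 \<and> dist h 0 < d \<and> diff_quot F x h \<in> T"
      by (intro bexI[of _ "of_rat h"]) (auto simp: inverse_eq_divide)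
  qed
qed

lemma borel_frequently_diff_quot_in:
  assumes "continuous_on UNIV F" "open T"
  shows "{x. \<exists>\<^sub>F h in at 0. diff_quot F x h \<in> T} \<in> sets borel"
proof -
  have [measurable]: "F \<in> borel_measurable borel"
    using assms(1) by (rule borel_measurable_continuous_onI)
  have "{x. diff_quot F x h \<in> T} \<in> sets borel" for h
  proof -
    have "(\<lambda>x. diff_quot F x h) \<in> borel_measurable borel"
      unfolding diff_quot_def by measurable
    then show ?thesis
      using borel_open[OF assms(2)] by (simp add: measurable_sets_borel vimage_def)
  qed
  then have "(\<Inter>n::nat. \<Union>h\<in>{h::rat. h \<noteq> 0 \<and> \<bar>of_rat h\<bar> < 1 / Suc n}.
      {x. diff_quot F x (of_rat h) \<in> T}) \<in> sets borel"
    by (intro sets.countable_INT' sets.countable_UN') auto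
  moreover have "{x. \<exists>\<^sub>F h in at 0. diff_quot F x h \<in> T} =
      (\<Inter>n::nat. \<Union>h\<in>{h::rat. h \<noteq> 0 \<and> \<bar>of_rat h\<bar> < 1 / Suc n}.
      {x. diff_quot F x (of_rat h) \<in> T})"
    unfolding frequently_diff_quot_iff_rat[OF assms] by blast
  ultimately show ?thesis by simp
qed

lemma borel_dini_gap:
  assumes "continuous_on UNIV F"
  shows "dini_gap F p q \<in> sets borel"
proof -
  have "{x. \<exists>\<^sub>F h in at 0. diff_quot F x h < p} \<in> sets borel"
    using borel_frequently_diff_quot_in[OF assms, of "{..<p}"] by simp
  moreover have "{x. \<exists>\<^sub>F h in at 0. q < diff_quot F x h} \<in> sets borel"
    using borel_frequently_diff_quot_in[OF assms, of "{q<..}"] by simp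
  ultimately show ?thesis
    unfolding dini_gap_def Collect_conj_eq by (rule sets.Int)
qed

section \<open>Monotone Lipschitz functions are differentiable almost everywhere\<close>

lemma small_cball_diff_quot:
  assumes "open W" "x \<in> W" "0 < d" "\<exists>\<^sub>F h in at 0. P (diff_quot F x h)"
  obtains c r where "0 < r" "r < d" "x \<in> cball c r" "cball c r \<subseteq> W"
    "P (diff_quot F (c - r) (2 * r))"
proof -
  obtain \<delta> where \<delta>: "0 < \<delta>" "ball x \<delta> \<subseteq> W"
    using assms(1,2) open_contains_ball by blast
  then have "0 < min \<delta> d" using assms(3) by simp
  then obtain h where h: "h \<noteq> 0" "dist h 0 < min \<delta> d" "P (diff_quot F x h)"
    using assms(4) unfolding frequently_at by blast
  define c r where "c = x + h / 2" and "r = \<bar>h\<bar> / 2"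
  have "dist x c = r" "0 < r" "2 * r < min \<delta> d"
    using h(1,2) by (simp_all add: c_def r_def dist_real_def)
  have "diff_quot F (c - r) (2 * r) = diff_quot F x h"
  proof (cases "0 < h")
    case True
    then have "c - r = x" "2 * r = h" by (simp_all add: c_def r_def)
    then show ?thesis by simp
  next
    case False
    then have "c - r = x + h" "2 * r = - h" by (simp_all add: c_def r_def)
    then show ?thesis by (simp add: diff_quot_reflect)
  qed
  moreover have "cball c r \<subseteq> W"
  proof
    fix y assume "y \<in> cball c r"
    then have "dist x y < \<delta>"
      using dist_triangle[of x y c] \<open>dist x c = r\<close> \<open>2 * r < min \<delta> d\<close> by simp
    then show "y \<in> W" using \<delta>(2) by auto
  qed
  ultimately show thesis
    using that[of r c] h(3) \<open>dist x c = r\<close> \<open>0 < r\<close> \<open>2 * r < min \<delta> d\<close>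
    by (simp add: dist_commute)
qed

lemma vitali_cover_diff_quot:
  assumes "open W" "S \<subseteq> W" "\<And>x. x \<in> S \<Longrightarrow> \<exists>\<^sub>F h in at 0. P (diff_quot F x h)"
  obtains D :: "(real \<times> real) set" where "countable D"
    "\<And>i. i \<in> D \<Longrightarrow> 0 < snd i \<and> cball (fst i) (snd i) \<subseteq> W \<and>
       P (diff_quot F (fst i - snd i) (2 * snd i))"
    "pairwise (\<lambda>i j. disjnt (cball (fst i) (snd i)) (cball (fst j) (snd j))) D"
    "negligible (S - (\<Union>i\<in>D. cball (fst i) (snd i)))"
proof -
  define K where "K = {i. 0 < snd i \<and> cball (fst i) (snd i) \<subseteq> W \<and>
     P (diff_quot F (fst i - snd i) (2 * snd i))}"
  have pos: "0 < snd i" if "i \<in> K" for i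
    using that by (simp add: K_def)
  have cover: "\<exists>i. i \<in> K \<and> x \<in> cball (fst i) (snd i) \<and> snd i < d"
    if x: "x \<in> S" and d: "0 < d" for x d
  proof -
    have "x \<in> W"
      using x assms(2) by blast
    obtain c r where "0 < r" "r < d" "x \<in> cball c r" "cball c r \<subseteq> W"
        "P (diff_quot F (c - r) (2 * r))"
      by (rule small_cball_diff_quot[OF assms(1) \<open>x \<in> W\<close> d assms(3)[OF x]])
    then show ?thesis
      by (intro exI[of _ "(c, r)"]) (simp add: K_def)
  qed
  obtain D where D: "countable D" "D \<subseteq> K"
    "pairwise (\<lambda>i j. disjnt (cball (fst i) (snd i)) (cball (fst j) (snd j))) D"
    "negligible (S - (\<Union>i\<in>D. cball (fst i) (snd i)))"
    by (rule Vitali_covering_theorem_cballs[of K snd S fst, OF pos cover])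
  show thesis
  proof (rule that[OF D(1) _ D(3,4)])
    fix i assume "i \<in> D"
    then show "0 < snd i \<and> cball (fst i) (snd i) \<subseteq> W \<and> P (diff_quot F (fst i - snd i) (2 * snd i))"
      using D(2) by (auto simp: K_def)
  qed
qed

lemma emeasure_interval_measure_cball:
  assumes "mono F" "continuous_on UNIV F" "0 < r"
  shows "emeasure (interval_measure F) (cball c r) =
    ennreal (diff_quot F (c - r) (2 * r)) * emeasure lborel (cball c r)"
proof -
  have "emeasure (interval_measure F) (cball c r) = ennreal (F (c + r) - F (c - r))"
    unfolding cball_eq_atLeastAtMost
    using assms by (intro emeasure_interval_measure_Icc) (auto simp: mono_def)
  also have "F (c + r) - F (c - r) = diff_quot F (c - r) (2 * r) * (2 * r)"
    using assms(3) by (simp add: diff_quot_def field_simps)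
  finally show ?thesis
    using assms(3) by (simp add: cball_eq_atLeastAtMost ennreal_mult'')
qed

lemma disjoint_family_on_cballs:
  "pairwise (\<lambda>i j. disjnt (cball (fst i) (snd i)) (cball (fst j) (snd j))) D \<Longrightarrow>
    disjoint_family_on (\<lambda>i. cball (fst i) (snd i)) D"
  by (auto simp: disjoint_family_on_def pairwise_def disjnt_def)

text \<open>Where difference quotients are frequently below \<open>p\<close>, a Vitali cover by small balls
  bounds the Lebesgue--Stieltjes measure of \<open>F\<close> by \<open>p\<close> times Lebesgue measure.\<close>
lemma interval_measure_open_cover_le:
  assumes F: "mono F" "continuous_on UNIV F"
    and "open W" "E \<subseteq> W" "\<And>x. x \<in> E \<Longrightarrow> \<exists>\<^sub>F h in at 0. diff_quot F x h < p"
  obtains V where "open V" "negligible (E - V)"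
    "emeasure (interval_measure F) V \<le> ennreal p * emeasure lborel W"
proof -
  let ?B = "\<lambda>i. cball (fst i) (snd i)"
  obtain D where D: "countable D"
      "\<And>i. i \<in> D \<Longrightarrow> 0 < snd i \<and> ?B i \<subseteq> W \<and> diff_quot F (fst i - snd i) (2 * snd i) < p"
      "pairwise (\<lambda>i j. disjnt (?B i) (?B j)) D" "negligible (E - (\<Union>i\<in>D. ?B i))"
    using vitali_cover_diff_quot[OF assms(3,4), of "\<lambda>t. t < p" F] assms(5) by blast
  define U where "U = (\<Union>i\<in>D. ?B i)"
  define V where "V = (\<Union>i\<in>D. ball (fst i) (snd i))"
  have "ennreal 1 * emeasure (interval_measure F) U \<le> ennreal p * emeasure lborel U"
    unfolding U_def
  proof (rule emeasure_disjoint_UN_compare[OF D(1) disjoint_family_on_cballs[OF D(3)]])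
    fix i assume "i \<in> D"
    then have "0 < snd i" "diff_quot F (fst i - snd i) (2 * snd i) < p"
      using D(2) by auto
    then show "ennreal 1 * emeasure (interval_measure F) (?B i) \<le> ennreal p * emeasure lborel (?B i)"
      using emeasure_interval_measure_cball[OF F] by (auto intro!: mult_right_mono ennreal_leI)
  qed auto
  also have "\<dots> \<le> ennreal p * emeasure lborel W"
    using D(2) assms(3) by (intro mult_left_mono emeasure_mono) (auto simp: U_def)
  finally have "emeasure (interval_measure F) U \<le> ennreal p * emeasure lborel W"
    by simp
  moreover have "emeasure (interval_measure F) V \<le> emeasure (interval_measure F) U"
    using D(1) by (intro emeasure_mono) (auto simp: U_def V_def)
  moreover have "open V"
    by (auto simp: V_def)
  moreover have "negligible (\<Union>i\<in>D. sphere (fst i) (snd i))"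
    using D(1) by (intro negligible_countable_Union) (auto intro: negligible_sphere)
  then have "negligible ((E - U) \<union> (\<Union>i\<in>D. sphere (fst i) (snd i)))"
    using D(4) unfolding U_def by (rule negligible_Un[rotated])
  then have "negligible (E - V)"
    by (rule negligible_subset) (force simp: U_def V_def less_le)
  ultimately show thesis
    using that by (meson order_trans)
qed

lemma interval_measure_open_ge:
  assumes F: "mono F" "continuous_on UNIV F"
    and "open V" "A \<subseteq> V" "A \<in> sets borel" "\<And>x. x \<in> A \<Longrightarrow> \<exists>\<^sub>F h in at 0. q < diff_quot F x h"
  shows "ennreal q * emeasure lborel A \<le> emeasure (interval_measure F) V"
proof -
  let ?B = "\<lambda>i. cball (fst i) (snd i)"
  obtain D where D: "countable D"
      "\<And>i. i \<in> D \<Longrightarrow> 0 < snd i \<and> ?B i \<subseteq> V \<and> q < diff_quot F (fst i - snd i) (2 * snd i)"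
      "pairwise (\<lambda>i j. disjnt (?B i) (?B j)) D" "negligible (A - (\<Union>i\<in>D. ?B i))"
    using vitali_cover_diff_quot[OF assms(3,4), of "\<lambda>t. q < t" F] assms(6) by blast
  define U where "U = (\<Union>i\<in>D. ?B i)"
  have U_borel: "U \<in> sets borel"
    unfolding U_def using D(1) by (intro sets.countable_UN'') auto
  have "emeasure lborel A \<le> emeasure lborel U"
    using D(4) assms(5) U_borel unfolding U_def by (rule emeasure_lborel_mono_negligible_diff)
  then have "ennreal q * emeasure lborel A \<le> ennreal q * emeasure lborel U"
    by (rule mult_left_mono) simp
  also have "\<dots> \<le> ennreal 1 * emeasure (interval_measure F) U"
    unfolding U_def
  proof (rule emeasure_disjoint_UN_compare[OF D(1) disjoint_family_on_cballs[OF D(3)]])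
    fix i assume "i \<in> D"
    then have "0 < snd i" "q < diff_quot F (fst i - snd i) (2 * snd i)"
      using D(2) by auto
    then show "ennreal q * emeasure lborel (?B i) \<le> ennreal 1 * emeasure (interval_measure F) (?B i)"
      using emeasure_interval_measure_cball[OF F] by (auto intro!: mult_right_mono ennreal_leI)
  qed auto
  also have "\<dots> \<le> emeasure (interval_measure F) V"
    using D(2) assms(3) by (simp add: U_def emeasure_mono UN_least)
  finally show ?thesis .
qed

lemma dini_gap_emeasure_le:
  assumes F: "mono F" "continuous_on UNIV F"
    and E: "E \<subseteq> dini_gap F p q" "E \<in> sets borel" and W: "open W" "E \<subseteq> W"
  shows "ennreal q * emeasure lborel E \<le> ennreal p * emeasure lborel W"
proof -
  obtain V where V: "open V" "negligible (E - V)"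
      "emeasure (interval_measure F) V \<le> ennreal p * emeasure lborel W"
    using interval_measure_open_cover_le[OF F W] E(1) by (auto simp: dini_gap_def)
  have "E \<inter> V \<in> sets borel"
    using E(2) V(1) by auto
  then have "emeasure lborel E \<le> emeasure lborel (E \<inter> V)"
    using V(2) E(2) by (intro emeasure_lborel_mono_negligible_diff) (auto simp: Diff_Int)
  then have "ennreal q * emeasure lborel E \<le> ennreal q * emeasure lborel (E \<inter> V)"
    by (rule mult_left_mono) simp
  also have "\<dots> \<le> emeasure (interval_measure F) V"
    using E(1) \<open>E \<inter> V \<in> sets borel\<close>
    by (intro interval_measure_open_ge[OF F V(1)]) (auto simp: dini_gap_def)
  finally show ?thesis
    using V(3) by simp
qed

lemma null_if_subset_dini_gap:
  assumes F: "mono F" "continuous_on UNIV F" and "0 < p" "p < q"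
    and E: "E \<subseteq> dini_gap F p q" "E \<in> sets borel" "emeasure lborel E \<noteq> \<infinity>"
  shows "E \<in> null_sets lborel"
proof -
  define m where "m = measure lborel E"
  have E_fin: "emeasure lborel E = ennreal m"
    unfolding m_def using E(3) by (intro emeasure_eq_ennreal_measure) auto
  have "0 \<le> m" by (simp add: m_def)
  have outer: "q * m \<le> p * (m + e)" if "0 < e" for e
  proof -
    obtain U where U: "open U" "E \<subseteq> U" "emeasure lborel (U - E) < e"
      using outer_regular_lborel[OF E(2) \<open>0 < e\<close>] by blast
    have "emeasure lborel U \<le> emeasure lborel (E \<union> (U - E))"
      by (rule emeasure_mono) (use U E(2) in auto)
    also have "\<dots> \<le> emeasure lborel E + emeasure lborel (U - E)"
      by (rule emeasure_subadditive) (use U E(2) in auto)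
    also have "\<dots> \<le> ennreal (m + e)"
      using U(3) E_fin \<open>0 \<le> m\<close> that by (simp add: add_left_mono less_imp_le)
    finally have "ennreal q * emeasure lborel E \<le> ennreal p * ennreal (m + e)"
      using dini_gap_emeasure_le[OF F E(1,2) U(1,2)] by (meson mult_left_mono order_trans zero_le)
    then have "ennreal (q * m) \<le> ennreal (p * (m + e))"
      using \<open>0 \<le> m\<close> that by (simp add: E_fin ennreal_mult'')
    moreover have "0 \<le> p * (m + e)"
      using \<open>0 < p\<close> \<open>0 \<le> m\<close> that by simp
    ultimately show ?thesis
      using ennreal_le_iff by blast
  qed
  have "q * m \<le> p * m"
  proof (rule field_le_epsilon)
    fix e :: real assume "0 < e"
    moreover have "p * (m + e / p) = p * m + e"
      using \<open>0 < p\<close> by (simp add: distrib_left)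
    ultimately show "q * m \<le> p * m + e"
      using outer[of "e / p"] \<open>0 < p\<close> by simp
  qed
  then have "(q - p) * m \<le> 0"
    by (simp add: left_diff_distrib)
  then have "m = 0"
    using \<open>p < q\<close> \<open>0 \<le> m\<close> by (simp add: mult_le_0_iff)
  then show ?thesis
    using E_fin E(2) by (auto simp: null_sets_def)
qed

lemma dini_gap_null:
  assumes F: "mono F" "L-lipschitz_on UNIV F" and "p < q"
  shows "dini_gap F p q \<in> null_sets lborel"
proof (cases "p \<le> 0")
  case True
  have "x \<notin> dini_gap F p q" for x
  proof
    assume "x \<in> dini_gap F p q"
    then have "\<exists>\<^sub>F h in at 0. diff_quot F x h < p"
      by (simp add: dini_gap_def)
    then obtain h where "h \<noteq> 0" "diff_quot F x h < p"
      unfolding frequently_at using zero_less_one by blast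
    then show False
      using diff_quot_bounds(1)[OF F, of h x] True by simp
  qed
  then have "dini_gap F p q = {}" by blast
  then show ?thesis by simp
next
  case False
  have bounded_null: "dini_gap F p q \<inter> {-n<..<n} \<in> null_sets lborel" for n :: real
  proof (rule null_if_subset_dini_gap[OF F(1) lipschitz_on_continuous_on[OF F(2)]])
    have "emeasure lborel (dini_gap F p q \<inter> {-n<..<n}) \<le> emeasure lborel {-n..n}"
      by (intro emeasure_mono) auto
    then show "emeasure lborel (dini_gap F p q \<inter> {-n<..<n}) \<noteq> \<infinity>"
      by (auto simp: emeasure_lborel_Icc_eq top_unique)
  qed (use False \<open>p < q\<close> borel_dini_gap[OF lipschitz_on_continuous_on[OF F(2)]] in auto)
  have gap_eq: "dini_gap F p q = (\<Union>n::nat. dini_gap F p q \<inter> {- real n<..<real n})"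
  proof (intro equalityI subsetI)
    fix x assume "x \<in> dini_gap F p q"
    moreover obtain n :: nat where "\<bar>x\<bar> < n"
      using reals_Archimedean2 by blast
    ultimately show "x \<in> (\<Union>n::nat. dini_gap F p q \<inter> {- real n<..<real n})"
      by (intro UN_I[of n]) (auto simp: abs_less_iff)
  qed auto
  show ?thesis
    by (subst gap_eq) (intro null_sets_UN bounded_null)
qed

lemma not_differentiable_eq_UN_dini_gap:
  fixes F :: "real \<Rightarrow> real"
  assumes "mono F" "L-lipschitz_on UNIV F"
  shows "{x. \<not> F differentiable (at x)} =
    (\<Union>pq\<in>{pq :: rat \<times> rat. fst pq < snd pq}. dini_gap F (of_rat (fst pq)) (of_rat (snd pq)))"
proof (intro equalityI subsetI)
  fix x assume "x \<in> {x. \<not> F differentiable (at x)}"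
  then obtain p q :: rat where "p < q" "x \<in> dini_gap F (of_rat p) (of_rat q)"
    using not_differentiable_in_dini_gap[OF assms] by blast
  then show "x \<in> (\<Union>pq\<in>{pq :: rat \<times> rat. fst pq < snd pq}. dini_gap F (of_rat (fst pq)) (of_rat (snd pq)))"
    by (intro UN_I[of "(p, q)"]) auto
next
  fix x assume "x \<in> (\<Union>pq\<in>{pq :: rat \<times> rat. fst pq < snd pq}. dini_gap F (of_rat (fst pq)) (of_rat (snd pq)))"
  then show "x \<in> {x. \<not> F differentiable (at x)}"
    using differentiable_not_in_dini_gap by (auto simp: of_rat_less)
qed

theorem AE_differentiable_mono_lipschitz:
  fixes F :: "real \<Rightarrow> real"
  assumes "mono F" "L-lipschitz_on UNIV F"
  shows "AE x in lborel. F differentiable (at x)"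
proof (rule AE_I')
  show "(\<Union>pq\<in>{pq :: rat \<times> rat. fst pq < snd pq}. dini_gap F (of_rat (fst pq)) (of_rat (snd pq)))
      \<in> null_sets lborel"
    by (intro null_sets_UN' dini_gap_null[OF assms]) (auto simp: of_rat_less)
  show "{x \<in> space lborel. \<not> F differentiable (at x)} \<subseteq>
      (\<Union>pq\<in>{pq :: rat \<times> rat. fst pq < snd pq}. dini_gap F (of_rat (fst pq)) (of_rat (snd pq)))"
    using not_differentiable_eq_UN_dini_gap[OF assms] by auto
qed

lemma borel_differentiable_points:
  fixes F :: "real \<Rightarrow> real"
  assumes "mono F" "L-lipschitz_on UNIV F"
  shows "{x. F differentiable (at x)} \<in> sets borel"
proof -
  have "{x. \<not> F differentiable (at x)} \<in> sets borel"
    unfolding not_differentiable_eq_UN_dini_gap[OF assms]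
    by (intro sets.countable_UN'' borel_dini_gap lipschitz_on_continuous_on[OF assms(2)]) auto
  then have "- {x. \<not> F differentiable (at x)} \<in> sets borel"
    by (rule borel_comp)
  then show ?thesis
    by (simp add: Compl_eq)
qed

definition deriv_or_zero :: "(real \<Rightarrow> real) \<Rightarrow> real \<Rightarrow> real" where
  "deriv_or_zero F x = (if F differentiable (at x) then deriv F x else 0)"

lemma deriv_or_zero_cong_ev:
  assumes "\<forall>\<^sub>F x in nhds u. f x = g x"
  shows "deriv_or_zero f u = deriv_or_zero g u"
proof -
  have "(f has_field_derivative D) (at u) \<longleftrightarrow> (g has_field_derivative D) (at u)" for D
    using assms by (intro DERIV_cong_ev) auto
  then show ?thesis
    by (simp add: deriv_or_zero_def real_differentiable_def deriv_def)
qed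

lemma deriv_or_zero_affine: "deriv_or_zero (\<lambda>x. a * x + b) u = a"
proof -
  have "((\<lambda>x. a * x + b) has_field_derivative a) (at u)"
    by (auto intro!: derivative_eq_intros)
  then show ?thesis
    by (auto simp: deriv_or_zero_def real_differentiable_def DERIV_imp_deriv)
qed

lemma filterlim_inverse_Suc_at_0: "filterlim (\<lambda>n. 1 / real (Suc n)) (at 0) sequentially"
  unfolding filterlim_at using LIMSEQ_inverse_real_of_nat
  by (simp add: inverse_eq_divide del: of_nat_Suc)

lemma diff_quot_seq_tendsto_deriv:
  "F differentiable (at x) \<Longrightarrow> (\<lambda>n. diff_quot F x (1 / Suc n)) \<longlonglongrightarrow> deriv F x"
  using filterlim_compose[OF diff_quot_tendsto_deriv filterlim_inverse_Suc_at_0] by simp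

lemma borel_measurable_deriv_or_zero:
  assumes "mono F" "L-lipschitz_on UNIV F"
  shows "deriv_or_zero F \<in> borel_measurable borel"
proof -
  have [measurable]: "F \<in> borel_measurable borel"
    using lipschitz_on_continuous_on[OF assms(2)] by (rule borel_measurable_continuous_onI)
  have [measurable]: "{x. F differentiable (at x)} \<in> sets borel"
    using assms by (rule borel_differentiable_points)
  have "deriv_or_zero F = (\<lambda>x. if x \<in> {x. F differentiable (at x)}
      then lim (\<lambda>n. diff_quot F x (1 / Suc n)) else 0)"
    using diff_quot_seq_tendsto_deriv[THEN limI]
    by (auto simp: deriv_or_zero_def fun_eq_iff simp del: of_nat_Suc)
  also have "\<dots> \<in> borel_measurable borel"
    unfolding diff_quot_def by measurable
  finally show ?thesis .
qed

lemma deriv_or_zero_bounds: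
  assumes "mono F" "L-lipschitz_on UNIV F"
  shows "0 \<le> deriv_or_zero F x" "deriv_or_zero F x \<le> L"
proof -
  have "0 \<le> deriv F x \<and> deriv F x \<le> L" if "F differentiable (at x)"
  proof -
    have lim: "(\<lambda>n. diff_quot F x (1 / Suc n)) \<longlonglongrightarrow> deriv F x"
      using that by (rule diff_quot_seq_tendsto_deriv)
    show ?thesis
      using LIMSEQ_le_const[OF lim] LIMSEQ_le_const2[OF lim] diff_quot_bounds[OF assms]
      by (metis Zero_not_Suc divide_eq_0_iff of_nat_eq_0_iff one_neq_zero)
  qed
  then show "0 \<le> deriv_or_zero F x" "deriv_or_zero F x \<le> L"
    using lipschitz_on_nonneg[OF assms(2)] by (auto simp: deriv_or_zero_def)
qed

lemma bounded_comp_diff_quot: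
  fixes g :: "real \<Rightarrow> real"
  assumes "mono F" "L-lipschitz_on UNIV F" "continuous_on UNIV g"
  obtains B where "\<And>x h. h \<noteq> 0 \<Longrightarrow> \<bar>g (diff_quot F x h)\<bar> \<le> B"
    "\<And>x. \<bar>g (deriv_or_zero F x)\<bar> \<le> B"
proof -
  have "compact (g ` {0..L})"
    by (intro compact_continuous_image continuous_on_subset[OF assms(3)]) auto
  then obtain B where B: "\<And>t. t \<in> {0..L} \<Longrightarrow> \<bar>g t\<bar> \<le> B"
    using compact_imp_bounded bounded_iff by (metis image_eqI real_norm_def)
  show thesis
  proof (rule that)
    show "\<bar>g (diff_quot F x h)\<bar> \<le> B" if "h \<noteq> 0" for x h
      using B diff_quot_bounds[OF assms(1,2) that] by simp
    show "\<bar>g (deriv_or_zero F x)\<bar> \<le> B" for x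
      using B deriv_or_zero_bounds[OF assms(1,2)] by simp
  qed
qed

lemma set_integrable_deriv_or_zero_comp:
  fixes g :: "real \<Rightarrow> real"
  assumes "mono F" "L-lipschitz_on UNIV F" "continuous_on UNIV g"
  shows "set_integrable lborel {a..b} (\<lambda>u. g (deriv_or_zero F u))"
proof -
  have [measurable]: "deriv_or_zero F \<in> borel_measurable borel" "g \<in> borel_measurable borel"
    using borel_measurable_deriv_or_zero[OF assms(1,2)] borel_measurable_continuous_onI[OF assms(3)]
    by auto
  obtain B where "\<And>x. \<bar>g (deriv_or_zero F x)\<bar> \<le> B"
    using bounded_comp_diff_quot[OF assms] by metis
  then show ?thesis
    unfolding set_integrable_def
    by (intro integrableI_bounded_set_indicator[where B = B]) (auto simp: emeasure_lborel_Icc_eq)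
qed

lemma set_integral_comp_diff_quot_tendsto:
  fixes g :: "real \<Rightarrow> real"
  assumes "mono F" "L-lipschitz_on UNIV F" "continuous_on UNIV g"
  shows "(\<lambda>n. LBINT u:{a..b}. g (diff_quot F u (1 / Suc n))) \<longlonglongrightarrow>
    (LBINT u:{a..b}. g (deriv_or_zero F u))"
proof -
  have [measurable]: "F \<in> borel_measurable borel" "g \<in> borel_measurable borel"
      "deriv_or_zero F \<in> borel_measurable borel"
    using borel_measurable_continuous_onI[OF lipschitz_on_continuous_on[OF assms(2)]]
      borel_measurable_continuous_onI[OF assms(3)] borel_measurable_deriv_or_zero[OF assms(1,2)]
    by auto
  obtain B where B: "\<And>x h. h \<noteq> 0 \<Longrightarrow> \<bar>g (diff_quot F x h)\<bar> \<le> B"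
    using bounded_comp_diff_quot[OF assms] by metis
  show ?thesis
    unfolding set_lebesgue_integral_def
  proof (rule integral_dominated_convergence[where w = "\<lambda>u. indicator {a..b} u *\<^sub>R B"])
    show "integrable lborel (\<lambda>u. indicator {a..b} u *\<^sub>R B)"
      by (rule borel_integrable_compact) auto
    show "AE u in lborel. (\<lambda>n. indicator {a..b} u *\<^sub>R g (diff_quot F u (1 / Suc n)))
        \<longlonglongrightarrow> indicator {a..b} u *\<^sub>R g (deriv_or_zero F u)"
      using AE_differentiable_mono_lipschitz[OF assms(1,2)]
    proof eventually_elim
      case (elim u)
      then have "(\<lambda>n. g (diff_quot F u (1 / Suc n))) \<longlonglongrightarrow> g (deriv_or_zero F u)"
        using continuous_on_tendsto_compose[OF assms(3) diff_quot_seq_tendsto_deriv]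
        by (simp add: deriv_or_zero_def)
      then show ?case
        by (intro tendsto_intros)
    qed
    show "AE u in lborel. norm (indicator {a..b} u *\<^sub>R g (diff_quot F u (1 / Suc n)))
        \<le> indicator {a..b} u *\<^sub>R B" for n
      using B[of "1 / Suc n"] by (auto simp: indicator_def)
  qed (auto simp: diff_quot_def)
qed

lemma set_integral_diff_quot_tendsto:
  assumes "continuous_on UNIV F" "a \<le> b"
  shows "(\<lambda>n. LBINT u:{a..b}. diff_quot F u (1 / Suc n)) \<longlonglongrightarrow> F b - F a"
proof -
  define G where "G x = (LBINT t=ereal 0..ereal x. F t)" for x :: real
  have G': "(G has_real_derivative F x) (at x)" for x
  proof -
    have "(G has_vector_derivative F x) (at x within {min 0 x - 1..max 0 x + 1})"
      unfolding G_def
      by (rule interval_integral_FTC2) (auto intro: continuous_on_subset[OF assms(1)])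
    moreover have "at x within {min 0 x - 1..max 0 x + 1} = at x"
      by (rule at_within_Icc_at) auto
    ultimately show ?thesis
      by (simp add: has_real_derivative_iff_has_vector_derivative)
  qed
  have integral_eq: "(LBINT u:{a..b}. diff_quot F u h) = diff_quot G b h - diff_quot G a h"
    if "h \<noteq> 0" for h
  proof -
    have "((\<lambda>u. diff_quot G u h) has_real_derivative diff_quot F u h) (at u)" for u
      unfolding diff_quot_def using that
      by (auto intro!: derivative_eq_intros DERIV_chain2[OF G'] G')
    moreover have "continuous_on {min a b..max a b} (\<lambda>u. diff_quot F u h)"
      unfolding diff_quot_def using that
      by (intro continuous_intros continuous_on_compose2[OF assms(1)]) auto
    ultimately have "(LBINT u=a..b. diff_quot F u h) = diff_quot G b h - diff_quot G a h"
      by (intro interval_integral_FTC_finite)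
        (auto simp: has_real_derivative_iff_has_vector_derivative[symmetric]
          intro: has_field_derivative_at_within)
    then show ?thesis
      using assms(2) by (simp add: interval_integral_Icc)
  qed
  have "(\<lambda>n. diff_quot G x (1 / Suc n)) \<longlonglongrightarrow> F x" for x
    using filterlim_compose[OF G'[unfolded has_field_derivative_iff_diff_quot]
        filterlim_inverse_Suc_at_0] .
  then show ?thesis
    by (simp add: integral_eq tendsto_diff del: of_nat_Suc)
qed

text \<open>By dominated convergence, the integral is the limit of the integrated difference
  quotients.\<close>
theorem set_integral_deriv_or_zero:
  assumes "mono F" "L-lipschitz_on UNIV F" "a \<le> b"
  shows "(LBINT u:{a..b}. deriv_or_zero F u) = F b - F a"
  using set_integral_comp_diff_quot_tendsto[OF assms(1,2), where g = "\<lambda>t. t"]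
    set_integral_diff_quot_tendsto[OF lipschitz_on_continuous_on[OF assms(2)] assms(3)]
  by (auto intro: LIMSEQ_unique)

lemma set_integral_deriv_or_zero_sq_deviation:
  assumes "mono F" "L-lipschitz_on UNIV F" "a < b"
  defines "c \<equiv> (F b - F a) / (b - a)"
  shows "(LBINT u:{a..b}. (deriv_or_zero F u - c)\<^sup>2) =
    (LBINT u:{a..b}. (deriv_or_zero F u)\<^sup>2) - (F b - F a)\<^sup>2 / (b - a)"
proof -
  let ?d = "deriv_or_zero F"
  have int: "set_integrable lborel {a..b} (\<lambda>u. g (?d u))" if "continuous_on UNIV g" for g :: "real \<Rightarrow> real"
    using set_integrable_deriv_or_zero_comp[OF assms(1,2) that] .
  have "(LBINT u:{a..b}. (?d u - c)\<^sup>2) =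
      (LBINT u:{a..b}. (?d u)\<^sup>2 - (2 * c * ?d u - c\<^sup>2))"
    by (simp add: power2_eq_square algebra_simps)
  also have "\<dots> = (LBINT u:{a..b}. (?d u)\<^sup>2) - (LBINT u:{a..b}. 2 * c * ?d u - c\<^sup>2)"
    by (intro set_integral_diff(2) int continuous_intros)
  also have "(LBINT u:{a..b}. 2 * c * ?d u - c\<^sup>2) = 2 * c * (LBINT u:{a..b}. ?d u) - c\<^sup>2 * (b - a)"
    using assms(3)
    by (subst set_integral_diff(2))
      (auto intro!: int continuous_intros simp: set_integral_mult_right set_integral_const_Icc)
  also have "\<dots> = 2 * c * (F b - F a) - c\<^sup>2 * (b - a)"
    using set_integral_deriv_or_zero[OF assms(1,2) less_imp_le[OF assms(3)]] by simp
  also have "\<dots> = (F b - F a)\<^sup>2 / (b - a)"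
  proof -
    have "2 * (D / l) * D - (D / l)\<^sup>2 * l = D\<^sup>2 / l" if "l \<noteq> 0" for D l :: real
      using that by (simp add: field_simps power2_eq_square)
    from this[where l = "b - a" and D = "F b - F a"] show ?thesis
      using assms(3) unfolding c_def by simp
  qed
  finally show ?thesis .
qed

lemma sq_increment_le_set_integral_deriv_sq:
  assumes "mono F" "L-lipschitz_on UNIV F" "a < b"
  shows "(F b - F a)\<^sup>2 / (b - a) \<le> (LBINT u:{a..b}. (deriv_or_zero F u)\<^sup>2)"
proof -
  have "0 \<le> (LBINT u:{a..b}. (deriv_or_zero F u - (F b - F a) / (b - a))\<^sup>2)"
    unfolding set_lebesgue_integral_def by (intro integral_nonneg_AE) auto
  then show ?thesis
    using set_integral_deriv_or_zero_sq_deviation[OF assms] by simp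
qed

lemma affine_if_set_integral_deriv_sq_eq:
  assumes F: "mono F" "L-lipschitz_on UNIV F" and "a < b"
    and eq: "(LBINT u:{a..b}. (deriv_or_zero F u)\<^sup>2) = (F b - F a)\<^sup>2 / (b - a)"
    and x: "x \<in> {a..b}"
  shows "F x = F a + (F b - F a) / (b - a) * (x - a)"
proof -
  define c where "c = (F b - F a) / (b - a)"
  have [measurable]: "deriv_or_zero F \<in> borel_measurable borel"
    using F by (rule borel_measurable_deriv_or_zero)
  have "set_integrable lborel {a..b} (\<lambda>u. (deriv_or_zero F u - c)\<^sup>2)"
    by (rule set_integrable_deriv_or_zero_comp[OF F]) (intro continuous_intros)
  then have "AE u in lborel. u \<in> {a..b} \<longrightarrow> (deriv_or_zero F u - c)\<^sup>2 = 0"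
    using set_integral_deriv_or_zero_sq_deviation[OF F \<open>a < b\<close>] eq
    by (intro AE_zero_if_set_integral_nonneg_eq_0) (auto simp: c_def)
  then have "AE u in lborel. u \<in> {a..x} \<longrightarrow> deriv_or_zero F u = c"
    by eventually_elim (use x in auto)
  then have "(LBINT u:{a..x}. deriv_or_zero F u) = (LBINT u:{a..x}. c)"
    by (intro set_lebesgue_integral_cong_AE) auto
  then show ?thesis
    using set_integral_deriv_or_zero[OF F, of a x] set_integral_const_Icc[of a x c] x
    by (simp add: c_def)
qed

section \<open>Copulas and their sections\<close>

lemma copula_boundary:
  assumes "is_copula C" "u \<in> {0..1}"
  shows "C u 0 = 0" "C 0 u = 0" "C u 1 = u" "C 1 u = u"
  using assms unfolding is_copula_def by auto

lemma copula_2_increasing: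
  assumes "is_copula C" "0 \<le> u1" "u1 \<le> u2" "u2 \<le> 1" "0 \<le> v1" "v1 \<le> v2" "v2 \<le> 1"
  shows "0 \<le> C u2 v2 - C u2 v1 - C u1 v2 + C u1 v1"
  using assms unfolding is_copula_def by blast

lemma copula_increment_fst:
  assumes C: "is_copula C" and "0 \<le> u1" "u1 \<le> u2" "u2 \<le> 1" "v \<in> {0..1}"
  shows "0 \<le> C u2 v - C u1 v" "C u2 v - C u1 v \<le> u2 - u1"
  using copula_2_increasing[OF C, of u1 u2 0 v] copula_2_increasing[OF C, of u1 u2 v 1]
    copula_boundary[OF C, of u1] copula_boundary[OF C, of u2] assms
  by auto

lemma copula_increment_snd:
  assumes C: "is_copula C" and "0 \<le> v1" "v1 \<le> v2" "v2 \<le> 1" "u \<in> {0..1}"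
  shows "0 \<le> C u v2 - C u v1" "C u v2 - C u v1 \<le> v2 - v1"
  using copula_2_increasing[OF C, of 0 u v1 v2] copula_2_increasing[OF C, of u 1 v1 v2]
    copula_boundary[OF C, of v1] copula_boundary[OF C, of v2] assms
  by auto

lemma copula_lipschitz_fst:
  assumes "is_copula C" "u \<in> {0..1}" "u' \<in> {0..1}" "v \<in> {0..1}"
  shows "\<bar>C u v - C u' v\<bar> \<le> \<bar>u - u'\<bar>"
  using copula_increment_fst[OF assms(1), of u u' v] copula_increment_fst[OF assms(1), of u' u v] assms
  by (cases "u \<le> u'") auto

lemma copula_lipschitz_snd:
  assumes "is_copula C" "u \<in> {0..1}" "v \<in> {0..1}" "v' \<in> {0..1}"
  shows "\<bar>C u v - C u v'\<bar> \<le> \<bar>v - v'\<bar>"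
  using copula_increment_snd[OF assms(1), of v v' u] copula_increment_snd[OF assms(1), of v' v u] assms
  by (cases "v \<le> v'") auto

lemma copula_ge_lower_frechet:
  assumes C: "is_copula C" and "u \<in> {0..1}" "v \<in> {0..1}"
  shows "max 0 (u + v - 1) \<le> C u v"
  using copula_increment_snd[OF C, of 0 v u] copula_2_increasing[OF C, of u 1 v 1]
    copula_boundary[OF C, of u] copula_boundary[OF C, of v] copula_boundary[OF C, of 1] assms
  by auto

lemma continuous_on_copula_snd:
  assumes "is_copula C" "u \<in> {0..1}"
  shows "continuous_on {0..1} (C u)"
proof -
  have "1-lipschitz_on {0..1} (C u)"
    using copula_lipschitz_snd[OF assms] by (intro lipschitz_onI) (auto simp: dist_real_def)
  then show ?thesis
    by (rule lipschitz_on_continuous_on)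
qed

lemma continuous_on_copula_diag:
  assumes "is_copula C"
  shows "continuous_on {0..1} (\<lambda>u. C u u)"
proof -
  have "\<bar>C u u - C w w\<bar> \<le> 2 * \<bar>u - w\<bar>" if "u \<in> {0..1}" "w \<in> {0..1}" for u w
  proof -
    have "\<bar>C u u - C w w\<bar> \<le> \<bar>C u u - C w u\<bar> + \<bar>C w u - C w w\<bar>"
      by linarith
    also have "\<dots> \<le> \<bar>u - w\<bar> + \<bar>u - w\<bar>"
      by (intro add_mono copula_lipschitz_fst[OF assms] copula_lipschitz_snd[OF assms]) (use that in auto)
    finally show ?thesis by simp
  qed
  then have "2-lipschitz_on {0..1} (\<lambda>u. C u u)"
    by (intro lipschitz_onI) (auto simp: dist_real_def)
  then show ?thesis
    by (rule lipschitz_on_continuous_on)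
qed

lemma abs_clamp_01_le: "\<bar>max 0 (min 1 x) - max 0 (min 1 y)\<bar> \<le> \<bar>x - y\<bar>" for x y :: real
  by auto

text \<open>Extended constantly outside \<open>[0, 1]\<close>, so that it is monotone and 1-Lipschitz on all
  of \<open>\<real>\<close>.\<close>
definition copula_section :: "(real \<Rightarrow> real \<Rightarrow> real) \<Rightarrow> real \<Rightarrow> real \<Rightarrow> real" where
  "copula_section C v x = C (max 0 (min 1 x)) v"

lemma copula_section_eq: "x \<in> {0..1} \<Longrightarrow> copula_section C v x = C x v"
  by (simp add: copula_section_def)

lemma mono_copula_section:
  assumes "is_copula C" "v \<in> {0..1}"
  shows "mono (copula_section C v)"
  unfolding mono_def copula_section_def
  using copula_increment_fst(1)[OF assms(1) _ _ _ assms(2)] by (simp add: min_def max_def)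

lemma lipschitz_copula_section:
  assumes "is_copula C" "v \<in> {0..1}"
  shows "1-lipschitz_on UNIV (copula_section C v)"
proof (rule lipschitz_onI)
  fix x y :: real
  have "\<bar>C (max 0 (min 1 x)) v - C (max 0 (min 1 y)) v\<bar> \<le> \<bar>max 0 (min 1 x) - max 0 (min 1 y)\<bar>"
    by (rule copula_lipschitz_fst[OF assms(1) _ _ assms(2)]) auto
  also have "\<dots> \<le> \<bar>x - y\<bar>"
    by (rule abs_clamp_01_le)
  finally show "dist (copula_section C v x) (copula_section C v y) \<le> 1 * dist x y"
    by (simp add: copula_section_def dist_real_def)
qed simp

lemma partial1_eq_deriv_or_zero_section:
  assumes "u \<in> {0<..<1}"
  shows "partial1 C u v = deriv_or_zero (copula_section C v) u"
proof -
  have "\<forall>\<^sub>F x in nhds u. x \<in> {0<..<1}"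
    using assms by (intro eventually_nhds_in_open) auto
  then have "\<forall>\<^sub>F x in nhds u. C x v = copula_section C v x"
    by eventually_elim (auto simp: copula_section_eq)
  then show ?thesis
    unfolding partial1_def by (simp add: deriv_or_zero_cong_ev flip: deriv_or_zero_def)
qed

definition section_energy :: "(real \<Rightarrow> real \<Rightarrow> real) \<Rightarrow> real \<Rightarrow> real" where
  "section_energy C v = (LBINT u:{0..1}. (deriv_or_zero (copula_section C v) u)\<^sup>2)"

lemma xi_eq_section_energy: "xi C = 6 * (LBINT v:{0..1}. section_energy C v) - 2"
proof -
  have "(LBINT u:{0..1}. (partial1 C u v)\<^sup>2) = section_energy C v" for v
    unfolding section_energy_def set_lebesgue_integral_def
    by (rule integral_discrete_difference[of "{0, 1}"])
      (auto simp: partial1_eq_deriv_or_zero_section indicator_def)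
  then show ?thesis
    by (simp add: xi_def)
qed

lemma section_energy_split:
  assumes "is_copula C" "v \<in> {0..1}"
  shows "section_energy C v = (LBINT u:{0..1/2}. (deriv_or_zero (copula_section C v) u)\<^sup>2)
    + (LBINT u:{1/2..1}. (deriv_or_zero (copula_section C v) u)\<^sup>2)"
proof -
  have "set_integrable lborel {0..1} (\<lambda>u. (deriv_or_zero (copula_section C v) u)\<^sup>2)"
    by (rule set_integrable_deriv_or_zero_comp[OF mono_copula_section[OF assms]
        lipschitz_copula_section[OF assms]]) (intro continuous_intros)
  then show ?thesis
    unfolding section_energy_def by (rule set_integral_split_Icc) auto
qed

lemma section_energy_bounds:
  assumes "is_copula C" "v \<in> {0..1}"
  shows "0 \<le> section_energy C v" "section_energy C v \<le> 1"
proof -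
  note mono = mono_copula_section[OF assms] and lip = lipschitz_copula_section[OF assms]
  show "0 \<le> section_energy C v"
    unfolding section_energy_def set_lebesgue_integral_def by (intro integral_nonneg_AE) auto
  have "section_energy C v \<le> (LBINT u:{0..1::real}. 1::real)"
    unfolding section_energy_def
  proof (rule set_integral_mono)
    show "set_integrable lborel {0..1} (\<lambda>u. (deriv_or_zero (copula_section C v) u)\<^sup>2)"
      by (rule set_integrable_deriv_or_zero_comp[OF mono lip]) (intro continuous_intros)
    show "set_integrable lborel {0..1::real} (\<lambda>u. 1::real)"
      unfolding set_integrable_def by (rule borel_integrable_compact) auto
    show "(deriv_or_zero (copula_section C v) u)\<^sup>2 \<le> 1" for u
      using deriv_or_zero_bounds[OF mono lip, of u] by (simp add: power_le_one)
  qed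
  then show "section_energy C v \<le> 1"
    by (simp add: set_integral_const_Icc)
qed

lemma borel_measurable_set_integral_continuous:
  fixes K :: "real \<Rightarrow> real \<Rightarrow> real"
  assumes "continuous_on UNIV (\<lambda>p. K (fst p) (snd p))"
  shows "(\<lambda>v. LBINT u:{a..b}. K u v) \<in> borel_measurable lborel"
proof -
  have "continuous_on UNIV (\<lambda>p::real \<times> real. (snd p, fst p))"
    by (intro continuous_intros)
  then have "continuous_on UNIV (\<lambda>p. K (snd p) (fst p))"
    using continuous_on_compose2[OF assms, of UNIV "\<lambda>p. (snd p, fst p)"] by simp
  then have "(\<lambda>p. K (snd p) (fst p)) \<in> borel_measurable borel"
    by (rule borel_measurable_continuous_onI)
  moreover have "(\<lambda>p::real \<times> real. indicator {a..b} (snd p) :: real) \<in> borel_measurable borel"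
  proof -
    have "(indicator (UNIV \<times> {a..b}) :: real \<times> real \<Rightarrow> real) \<in> borel_measurable borel"
      by (intro borel_measurable_indicator borel_closed closed_Times) auto
    moreover have "(indicator (UNIV \<times> {a..b}) :: real \<times> real \<Rightarrow> real) = (\<lambda>p. indicator {a..b} (snd p))"
      by (auto simp: indicator_def fun_eq_iff)
    ultimately show ?thesis
      by simp
  qed
  ultimately have "(\<lambda>p. indicator {a..b} (snd p) *\<^sub>R K (snd p) (fst p)) \<in> borel_measurable (lborel \<Otimes>\<^sub>M lborel)"
    unfolding lborel_prod measurable_lborel2 by (rule borel_measurable_scaleR[rotated])
  then have "case_prod (\<lambda>v u. indicator {a..b} u *\<^sub>R K u v) \<in> borel_measurable (lborel \<Otimes>\<^sub>M lborel)"
    by (simp add: case_prod_beta')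
  from lborel.borel_measurable_lebesgue_integral[OF this]
  show ?thesis
    unfolding set_lebesgue_integral_def .
qed

lemma continuous_on_copula_clamped:
  assumes C: "is_copula C"
  shows "continuous_on UNIV (\<lambda>p. C (max 0 (min 1 (fst p))) (max 0 (min 1 (snd p))))"
proof -
  define c :: "real \<Rightarrow> real" where "c x = max 0 (min 1 x)" for x
  have c01: "c x \<in> {0..1}" for x
    by (simp add: c_def)
  have "\<bar>C (c (fst p)) (c (snd p)) - C (c (fst q)) (c (snd q))\<bar> \<le> 2 * dist p q" for p q
  proof -
    have "\<bar>C (c (fst p)) (c (snd p)) - C (c (fst q)) (c (snd q))\<bar> \<le>
        \<bar>C (c (fst p)) (c (snd p)) - C (c (fst q)) (c (snd p))\<bar>
        + \<bar>C (c (fst q)) (c (snd p)) - C (c (fst q)) (c (snd q))\<bar>"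
      using abs_triangle_ineq[of "C (c (fst p)) (c (snd p)) - C (c (fst q)) (c (snd p))"
          "C (c (fst q)) (c (snd p)) - C (c (fst q)) (c (snd q))"] by simp
    also have "\<dots> \<le> \<bar>c (fst p) - c (fst q)\<bar> + \<bar>c (snd p) - c (snd q)\<bar>"
      by (intro add_mono copula_lipschitz_fst[OF C c01 c01 c01] copula_lipschitz_snd[OF C c01 c01 c01])
    also have "\<dots> \<le> \<bar>fst p - fst q\<bar> + \<bar>snd p - snd q\<bar>"
      unfolding c_def by (intro add_mono abs_clamp_01_le)
    also have "\<dots> \<le> 2 * dist p q"
      using dist_fst_le[of p q] dist_snd_le[of p q] by (simp add: dist_real_def)
    finally show ?thesis .
  qed
  then have "2-lipschitz_on UNIV (\<lambda>p. C (c (fst p)) (c (snd p)))"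
    by (intro lipschitz_onI) (simp_all add: dist_real_def)
  then show ?thesis
    unfolding c_def[abs_def] by (rule lipschitz_on_continuous_on)
qed

text \<open>Measurability in \<open>v\<close> is inherited from the integrated difference quotients, which
  are continuous in \<open>(u, v)\<close>.\<close>
lemma borel_measurable_section_energy:
  assumes C: "is_copula C"
  shows "(\<lambda>v. indicator {0..1} v * section_energy C v) \<in> borel_measurable lborel"
proof -
  define G where "G p = C (max 0 (min 1 (fst p))) (max 0 (min 1 (snd p)))" for p :: "real \<times> real"
  have G_cont: "continuous_on UNIV G"
    unfolding G_def[abs_def] using C by (rule continuous_on_copula_clamped)
  define J where "J n v = (LBINT u:{0..1}. (diff_quot (\<lambda>x. G (x, v)) u (1 / Suc n))\<^sup>2)" for n v
  have "J n \<in> borel_measurable lborel" for n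
  proof -
    have shifted: "continuous_on UNIV (\<lambda>p::real \<times> real. G (fst p + 1 / Suc n, snd p))"
      by (rule continuous_on_compose2[OF G_cont]) (auto intro!: continuous_intros)
    have "continuous_on UNIV (\<lambda>p. (diff_quot (\<lambda>x. G (x, snd p)) (fst p) (1 / Suc n))\<^sup>2)"
      unfolding diff_quot_def
      by (intro continuous_on_power continuous_on_divide continuous_on_diff shifted
          continuous_on_const) (simp_all add: G_cont)
    from borel_measurable_set_integral_continuous[where
        K = "\<lambda>u v. (diff_quot (\<lambda>x. G (x, v)) u (1 / Suc n))\<^sup>2", OF this, of 0 1]
    show ?thesis
      unfolding J_def[abs_def] .
  qed
  then have meas: "(\<lambda>v. indicator {0..1} v * J n v) \<in> borel_measurable lborel" for n
    by (intro borel_measurable_times) auto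
  have lim: "(\<lambda>n. indicator {0..1} v * J n v) \<longlonglongrightarrow> indicator {0..1} v * section_energy C v" for v
  proof (cases "v \<in> {0..1}")
    case True
    then have "(\<lambda>x. G (x, v)) = copula_section C v"
      by (auto simp: G_def copula_section_def fun_eq_iff)
    moreover have "continuous_on UNIV (\<lambda>t::real. t\<^sup>2)"
      by (intro continuous_intros)
    ultimately show ?thesis
      using True set_integral_comp_diff_quot_tendsto[OF mono_copula_section[OF C True]
          lipschitz_copula_section[OF C True], of "\<lambda>t. t\<^sup>2" 0 1]
      by (simp add: J_def section_energy_def)
  qed simp
  show ?thesis
    by (rule borel_measurable_LIMSEQ_real[OF lim meas])
qed

lemma set_integrable_section_energy:
  assumes "is_copula C"
  shows "set_integrable lborel {0..1} (section_energy C)"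
  unfolding set_integrable_def
proof (rule Bochner_Integration.integrable_bound)
  show "integrable lborel (\<lambda>v::real. indicator {0..1} v *\<^sub>R (1::real))"
    by (rule borel_integrable_compact) auto
  show "(\<lambda>v. indicator {0..1} v *\<^sub>R section_energy C v) \<in> borel_measurable lborel"
    using borel_measurable_section_energy[OF assms] by simp
  show "AE v in lborel. norm (indicator {0..1} v *\<^sub>R section_energy C v)
      \<le> norm (indicator {0..1} v *\<^sub>R (1::real))"
    using section_energy_bounds[OF assms] by (auto simp: indicator_def)
qed

section \<open>The copula \<open>C\<^sub>#\<close>\<close>

text \<open>\<open>hinge v\<close> is the length of \<open>[0, v] \<inter> [1/2, 1]\<close>; it is also \<open>C (1/2) v\<close> for every
  copula with \<open>C (1/2) (1/2) = 0\<close>.\<close>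
definition hinge :: "real \<Rightarrow> real" where
  "hinge v = max 0 (v - 1/2)"

lemma continuous_on_hinge: "continuous_on S hinge"
  unfolding hinge_def by (intro continuous_intros)

lemma measure_Icc_inter_upper_half:
  assumes "x \<in> {0..1}"
  shows "measure lborel ({0..x} \<inter> {1/2..1}) = hinge x"
proof (cases "1/2 \<le> x")
  case True
  then have "{0..x} \<inter> {1/2..1} = {1/2..x}" using assms by auto
  then show ?thesis using True by (simp add: hinge_def)
next
  case False
  then have "{0..x} \<inter> {1/2..1} = {}" by auto
  then show ?thesis using False by (simp add: hinge_def)
qed

lemma measure_Icc_inter_lower_half:
  assumes "x \<in> {0..1}"
  shows "measure lborel ({0..x} \<inter> {0..<1/2}) = x - hinge x"
proof (cases "1/2 \<le> x")
  case True
  then have "{0..x} \<inter> {0..<1/2} = {0..<1/2}" by auto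
  then show ?thesis using True by (simp add: hinge_def)
next
  case False
  then have "{0..x} \<inter> {0..<1/2} = {0..x}" by auto
  then show ?thesis using False assms by (simp add: hinge_def)
qed

lemma Csharp_eq:
  assumes u: "u \<in> {0..1}" and v: "v \<in> {0..1}"
  shows "Csharp u v = 2 * hinge v * (u - hinge u) + 2 * (v - hinge v) * hinge u"
proof -
  have inner: "(LBINT t:{0..v}. csharp_density s t) =
      2 * hinge v * indicator {0..<1/2} s + 2 * (v - hinge v) * indicator {1/2..1} s" for s
  proof -
    have "(LBINT t:{0..v}. csharp_density s t) = (LBINT t:{0..v}.
        (2 * indicator {0..<1/2} s) * indicator {1/2..1} t + (2 * indicator {1/2..1} s) * indicator {0..<1/2} t)"
      by (rule set_lebesgue_integral_cong) (auto simp: csharp_density_def algebra_simps)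
    also have "\<dots> = (2 * indicator {0..<1/2} s) * measure lborel ({0..v} \<inter> {1/2..1})
        + (2 * indicator {1/2..1} s) * measure lborel ({0..v} \<inter> {0..<1/2})"
      by (rule set_integral_indicator_comb) (auto simp: emeasure_lborel_Icc_eq)
    finally show ?thesis
      using measure_Icc_inter_upper_half[OF v] measure_Icc_inter_lower_half[OF v] by simp
  qed
  have "Csharp u v = (LBINT s:{0..u}.
      (2 * hinge v) * indicator {0..<1/2} s + (2 * (v - hinge v)) * indicator {1/2..1} s)"
    unfolding Csharp_def by (rule set_lebesgue_integral_cong) (auto simp: inner)
  also have "\<dots> = (2 * hinge v) * measure lborel ({0..u} \<inter> {0..<1/2})
      + (2 * (v - hinge v)) * measure lborel ({0..u} \<inter> {1/2..1})"
    by (rule set_integral_indicator_comb) (auto simp: emeasure_lborel_Icc_eq)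
  finally show ?thesis
    using measure_Icc_inter_upper_half[OF u] measure_Icc_inter_lower_half[OF u] by simp
qed

lemma is_copula_Csharp: "is_copula Csharp"
  unfolding is_copula_def
proof (intro conjI ballI allI impI)
  fix u :: real assume "u \<in> {0..1}"
  then show "Csharp u 0 = 0" "Csharp 0 u = 0" "Csharp u 1 = u" "Csharp 1 u = u"
    by (auto simp: Csharp_eq hinge_def algebra_simps)
next
  fix u1 u2 v1 v2 :: real
  assume H: "0 \<le> u1 \<and> u1 \<le> u2 \<and> u2 \<le> 1 \<and> 0 \<le> v1 \<and> v1 \<le> v2 \<and> v2 \<le> 1"
  have mono: "hinge x \<le> hinge y" "x - hinge x \<le> y - hinge y" if "x \<le> y" for x y
    using that by (auto simp: hinge_def)
  have "Csharp u2 v2 - Csharp u2 v1 - Csharp u1 v2 + Csharp u1 v1 =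
      2 * ((u2 - hinge u2) - (u1 - hinge u1)) * (hinge v2 - hinge v1)
      + 2 * (hinge u2 - hinge u1) * ((v2 - hinge v2) - (v1 - hinge v1))"
    using H by (simp add: Csharp_eq algebra_simps)
  also have "0 \<le> \<dots>"
    using H mono[of u1 u2] mono[of v1 v2] by (intro add_nonneg_nonneg mult_nonneg_nonneg) auto
  finally show "0 \<le> Csharp u2 v2 - Csharp u2 v1 - Csharp u1 v2 + Csharp u1 v1" .
qed

lemma Csharp_diag: "u \<in> {0..1} \<Longrightarrow> Csharp u u = 2 * hinge u"
  by (cases "1/2 \<le> u") (auto simp: Csharp_eq hinge_def algebra_simps)

lemma set_integral_hinge: "(LBINT v:{0..1}. 2 * hinge v) = 1/4"
proof -
  have "continuous_on {0..1} (\<lambda>v. 2 * hinge v)"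
    by (intro continuous_on_mult continuous_on_const continuous_on_hinge)
  then have "set_integrable lborel {0..1} (\<lambda>v. 2 * hinge v)"
    by (rule set_integrable_continuous_Icc)
  then have "(LBINT v:{0..1}. 2 * hinge v) =
      (LBINT v:{0..1/2}. 2 * hinge v) + (LBINT v:{1/2..1}. 2 * hinge v)"
    by (rule set_integral_split_Icc) auto
  also have "(LBINT v:{0..1/2}. 2 * hinge v) = (LBINT v:{0..1/2::real}. 0::real)"
    by (rule set_lebesgue_integral_cong) (auto simp: hinge_def)
  also have "(LBINT v:{1/2..1}. 2 * hinge v) = (LBINT v:{1/2..1}. 2 * v - 1)"
    by (rule set_lebesgue_integral_cong) (auto simp: hinge_def)
  also have "\<dots> = (1\<^sup>2 - 1) - ((1/2)\<^sup>2 - 1/2)"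
    by (rule set_integral_Icc_FTC[where G = "\<lambda>v. v\<^sup>2 - v"])
      (auto intro!: continuous_intros derivative_eq_intros simp: power2_eq_square power3_eq_cube field_simps)
  finally show ?thesis
    by (simp add: power2_eq_square)
qed

lemma psi_Csharp: "psi Csharp = - 1/2"
proof -
  have "(LBINT u:{0..1}. Csharp u u) = (LBINT u:{0..1}. 2 * hinge u)"
    by (rule set_lebesgue_integral_cong) (auto simp: Csharp_diag)
  then show ?thesis
    unfolding psi_def set_integral_hinge by simp
qed

text \<open>The Cauchy--Schwarz lower bound for the energy of a section on the two halves of
  \<open>[0, 1]\<close>, given its values \<open>0\<close>, \<open>hinge v\<close>, \<open>v\<close> at \<open>0\<close>, \<open>1/2\<close>, \<open>1\<close>.\<close>
definition energy_bound :: "real \<Rightarrow> real" where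
  "energy_bound v = 2 * (hinge v)\<^sup>2 + 2 * (v - hinge v)\<^sup>2"

lemma set_integral_energy_bound: "(LBINT v:{0..1}. energy_bound v) = 5/12"
proof -
  have "continuous_on {0..1} energy_bound"
    unfolding energy_bound_def by (intro continuous_intros continuous_on_hinge)
  then have "set_integrable lborel {0..1} energy_bound"
    by (rule set_integrable_continuous_Icc)
  then have "(LBINT v:{0..1}. energy_bound v) =
      (LBINT v:{0..1/2}. energy_bound v) + (LBINT v:{1/2..1}. energy_bound v)"
    by (rule set_integral_split_Icc) auto
  also have "(LBINT v:{0..1/2}. energy_bound v) = (LBINT v:{0..1/2}. 2 * v\<^sup>2)"
    by (rule set_lebesgue_integral_cong) (auto simp: energy_bound_def hinge_def)
  also have "\<dots> = 2 * (1/2)^3 / 3 - 2 * 0^3 / 3"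
    by (rule set_integral_Icc_FTC[where G = "\<lambda>v. 2 * v^3 / 3"])
      (auto intro!: continuous_intros derivative_eq_intros simp: power2_eq_square power3_eq_cube field_simps)
  also have "(LBINT v:{1/2..1}. energy_bound v) = (LBINT v:{1/2..1}. 2 * (v - 1/2)\<^sup>2 + 1/2)"
    by (rule set_lebesgue_integral_cong) (auto simp: energy_bound_def hinge_def power2_eq_square)
  also have "\<dots> = (2 * (1 - 1/2)^3 / 3 + 1 / 2) - (2 * (1/2 - 1/2)^3 / 3 + (1/2) / 2)"
    by (rule set_integral_Icc_FTC[where G = "\<lambda>v. 2 * (v - 1/2)^3 / 3 + v / 2"])
      (auto intro!: continuous_intros derivative_eq_intros simp: power2_eq_square power3_eq_cube field_simps)
  finally show ?thesis
    by (simp add: power3_eq_cube)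
qed

lemma section_energy_Csharp:
  assumes v: "v \<in> {0..1}"
  shows "section_energy Csharp v = energy_bound v"
proof -
  let ?d = "deriv_or_zero (copula_section Csharp v)"
  have affine: "?d u = a" if "open S" "u \<in> S" "S \<subseteq> {0..1}"
      "\<And>x. x \<in> S \<Longrightarrow> Csharp x v = a * x + b" for S u a b
  proof -
    have "\<forall>\<^sub>F x in nhds u. x \<in> S"
      using that by (intro eventually_nhds_in_open) auto
    then have "\<forall>\<^sub>F x in nhds u. copula_section Csharp v x = a * x + b"
      by eventually_elim (use that in \<open>auto simp: copula_section_eq\<close>)
    then show ?thesis
      by (simp add: deriv_or_zero_cong_ev deriv_or_zero_affine)
  qed
  have "?d u = 2 * hinge v" if "u \<in> {0<..<1/2}" for u
  proof (rule affine[of "{0<..<1/2}"])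
    show "Csharp x v = 2 * hinge v * x + 0" if "x \<in> {0<..<1/2}" for x
      using that v by (simp add: Csharp_eq hinge_def)
  qed (use that in auto)
  then have "(LBINT u:{0..1/2}. (?d u)\<^sup>2) = (2 * hinge v)\<^sup>2 * (1/2 - 0)"
    by (intro set_integral_sq_const_open) auto
  moreover have "?d u = 2 * (v - hinge v)" if "u \<in> {1/2<..<1}" for u
  proof (rule affine[of "{1/2<..<1}"])
    show "Csharp x v = 2 * (v - hinge v) * x + (hinge v - (v - hinge v))" if "x \<in> {1/2<..<1}" for x
      using that v by (simp add: Csharp_eq hinge_def algebra_simps)
  qed (use that in auto)
  then have "(LBINT u:{1/2..1}. (?d u)\<^sup>2) = (2 * (v - hinge v))\<^sup>2 * (1 - 1/2)"
    by (intro set_integral_sq_const_open) auto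
  ultimately show ?thesis
    using section_energy_split[OF is_copula_Csharp v]
    by (simp add: energy_bound_def power2_eq_square algebra_simps)
qed

lemma xi_Csharp: "xi Csharp = 1/2"
proof -
  have "(LBINT v:{0..1}. section_energy Csharp v) = (LBINT v:{0..1}. energy_bound v)"
    by (rule set_lebesgue_integral_cong) (auto simp: section_energy_Csharp)
  then show ?thesis
    unfolding xi_eq_section_energy set_integral_energy_bound by simp
qed

section \<open>Minimality of \<open>\<xi>\<close> under \<open>\<psi> = -1/2\<close>\<close>

text \<open>The diagonal lies above its lower Frechet bound \<open>2 * hinge u\<close>, whose integral is
  already \<open>1/4\<close>; so \<open>\<psi> C = -1/2\<close> forces equality everywhere by continuity.\<close>
lemma copula_half_half_eq_0:
  assumes C: "is_copula C" and "psi C = - 1/2"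
  shows "C (1/2) (1/2) = 0"
proof -
  let ?g = "\<lambda>u. C u u - 2 * hinge u"
  have cont: "continuous_on {0..1} ?g"
    by (intro continuous_intros continuous_on_copula_diag[OF C] continuous_on_hinge)
  have nonneg: "0 \<le> ?g u" if "u \<in> {0..1}" for u
    using copula_ge_lower_frechet[OF C that that] by (auto simp: hinge_def max_def)
  have "set_integrable lborel {0..1} (\<lambda>u. C u u)" "set_integrable lborel {0..1} (\<lambda>u. 2 * hinge u)"
    by (intro set_integrable_continuous_Icc continuous_on_copula_diag[OF C] continuous_intros
        continuous_on_hinge)+
  then have "(LBINT u:{0..1}. ?g u) = (LBINT u:{0..1}. C u u) - (LBINT u:{0..1}. 2 * hinge u)"
    by (rule set_integral_diff(2))
  also have "\<dots> = 0"
    using \<open>psi C = - 1/2\<close> set_integral_hinge unfolding psi_def by linarith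
  finally have "AE u in lborel. u \<in> {0..1} \<longrightarrow> ?g u = 0"
    using set_integrable_continuous_Icc[OF cont] nonneg by (intro AE_zero_if_set_integral_nonneg_eq_0)
  then have "?g (1/2) = 0"
    by (rule continuous_AE_zero_Icc[OF cont, rotated]) auto
  then show ?thesis
    by (simp add: hinge_def)
qed

lemma copula_half_eq_hinge:
  assumes C: "is_copula C" and "C (1/2) (1/2) = 0" and v: "v \<in> {0..1}"
  shows "C (1/2) v = hinge v"
proof (cases "v \<le> 1/2")
  case True
  then show ?thesis
    using copula_increment_snd(1)[OF C, of v "1/2" "1/2"] copula_ge_lower_frechet[OF C, of "1/2" v] assms
    by (auto simp: hinge_def)
next
  case False
  then show ?thesis
    using copula_increment_snd[OF C, of "1/2" v "1/2"] copula_ge_lower_frechet[OF C, of "1/2" v] assms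
    by (auto simp: hinge_def)
qed

lemma section_energy_halves_ge:
  assumes C: "is_copula C" and "C (1/2) (1/2) = 0" and v: "v \<in> {0..1}"
  shows "2 * (hinge v)\<^sup>2 \<le> (LBINT u:{0..1/2}. (deriv_or_zero (copula_section C v) u)\<^sup>2)"
    "2 * (v - hinge v)\<^sup>2 \<le> (LBINT u:{1/2..1}. (deriv_or_zero (copula_section C v) u)\<^sup>2)"
  using sq_increment_le_set_integral_deriv_sq[OF mono_copula_section[OF C v]
      lipschitz_copula_section[OF C v], of 0 "1/2"]
    sq_increment_le_set_integral_deriv_sq[OF mono_copula_section[OF C v]
      lipschitz_copula_section[OF C v], of "1/2" 1]
    copula_half_eq_hinge[OF assms] copula_boundary[OF C v]
  by (simp_all add: copula_section_eq)

lemma energy_bound_le_section_energy: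
  assumes "is_copula C" "C (1/2) (1/2) = 0" "v \<in> {0..1}"
  shows "energy_bound v \<le> section_energy C v"
  using section_energy_halves_ge[OF assms] section_energy_split[OF assms(1,3)]
  by (simp add: energy_bound_def)

lemma eq_Csharp_if_section_energy_eq:
  assumes C: "is_copula C" and half: "C (1/2) (1/2) = 0" and v: "v \<in> {0..1}"
    and eq: "section_energy C v = energy_bound v" and u: "u \<in> {0..1}"
  shows "C u v = Csharp u v"
proof -
  let ?F = "copula_section C v"
  note F = mono_copula_section[OF C v] lipschitz_copula_section[OF C v]
  have vals: "?F 0 = 0" "?F (1/2) = hinge v" "?F 1 = v"
    using copula_boundary[OF C v] copula_half_eq_hinge[OF C half v] by (simp_all add: copula_section_eq)
  have "(LBINT u:{0..1/2}. (deriv_or_zero ?F u)\<^sup>2) = (?F (1/2) - ?F 0)\<^sup>2 / (1/2 - 0)"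
    "(LBINT u:{1/2..1}. (deriv_or_zero ?F u)\<^sup>2) = (?F 1 - ?F (1/2))\<^sup>2 / (1 - 1/2)"
    using section_energy_halves_ge[OF C half v] section_energy_split[OF C v] eq vals
    by (simp_all add: energy_bound_def)
  then have "?F u = Csharp u v"
    using affine_if_set_integral_deriv_sq_eq[OF F, of 0 "1/2" u]
      affine_if_set_integral_deriv_sq_eq[OF F, of "1/2" 1 u] vals u v
    by (cases "u \<le> 1/2") (auto simp: Csharp_eq hinge_def algebra_simps)
  then show ?thesis
    using u by (simp add: copula_section_eq)
qed

theorem xi_ge_half:
  assumes C: "is_copula C" and "psi C = - 1/2"
  shows "1/2 \<le> xi C"
proof -
  have "(LBINT v:{0..1}. energy_bound v) \<le> (LBINT v:{0..1}. section_energy C v)"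
    using energy_bound_le_section_energy[OF C copula_half_half_eq_0[OF assms]]
    by (intro set_integral_mono set_integrable_section_energy[OF C] set_integrable_continuous_Icc)
      (auto simp: energy_bound_def intro!: continuous_intros continuous_on_hinge)
  then show ?thesis
    unfolding xi_eq_section_energy set_integral_energy_bound by simp
qed

text \<open>Equality forces \<open>section_energy C v = energy_bound v\<close>, hence \<open>C u v = Csharp u v\<close>,
  for almost every \<open>v\<close>; continuity in \<open>v\<close> removes the exceptional set.\<close>
theorem eq_Csharp_if_xi_eq_half:
  assumes C: "is_copula C" and "psi C = - 1/2" and "xi C = 1/2"
    and u: "u \<in> {0..1}" and v: "v \<in> {0..1}"
  shows "C u v = Csharp u v"
proof -
  have half: "C (1/2) (1/2) = 0"
    using assms(1,2) by (rule copula_half_half_eq_0)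
  have bound_int: "set_integrable lborel {0..1} energy_bound"
    by (intro set_integrable_continuous_Icc)
      (auto simp: energy_bound_def intro!: continuous_intros continuous_on_hinge)
  have "(LBINT v:{0..1}. section_energy C v - energy_bound v) =
      (LBINT v:{0..1}. section_energy C v) - (LBINT v:{0..1}. energy_bound v)"
    by (rule set_integral_diff(2)[OF set_integrable_section_energy[OF C] bound_int])
  also have "\<dots> = 0"
    using \<open>xi C = 1/2\<close> by (simp add: xi_eq_section_energy set_integral_energy_bound)
  finally have "AE w in lborel. w \<in> {0..1} \<longrightarrow> section_energy C w - energy_bound w = 0"
    using energy_bound_le_section_energy[OF C half]
    by (intro AE_zero_if_set_integral_nonneg_eq_0 set_integral_diff(1)
        set_integrable_section_energy[OF C] bound_int) auto
  then have "AE w in lborel. w \<in> {0..1} \<longrightarrow> C u w - Csharp u w = 0"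
    by eventually_elim (use eq_Csharp_if_section_energy_eq[OF C half _ _ u] in auto)
  moreover have "continuous_on {0..1} (\<lambda>w. C u w - Csharp u w)"
    by (intro continuous_intros continuous_on_copula_snd[OF C u]
        continuous_on_copula_snd[OF is_copula_Csharp u])
  ultimately show ?thesis
    using continuous_AE_zero_Icc[of 0 1 "\<lambda>w. C u w - Csharp u w" v] v by simp
qed

lemma xi_eq_half_if_eq_Csharp:
  assumes "\<forall>u\<in>{0..1}. \<forall>v\<in>{0..1}. C u v = Csharp u v"
  shows "xi C = 1/2"
proof -
  have "copula_section C v = copula_section Csharp v" if "v \<in> {0..1}" for v
    using assms that by (auto simp: copula_section_def fun_eq_iff)
  then have "(LBINT v:{0..1}. section_energy C v) = (LBINT v:{0..1}. section_energy Csharp v)"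
    by (intro set_lebesgue_integral_cong) (auto simp: section_energy_def)
  then show ?thesis
    using xi_Csharp unfolding xi_eq_section_energy by simp
qed

theorem mainTheorem8:
  shows "is_copula Csharp \<and> psi Csharp = - 1/2 \<and> xi Csharp = 1/2 \<and>
    (\<forall>C. is_copula C \<and> psi C = - 1/2 \<longrightarrow>
        xi C \<ge> 1/2 \<and>
        (xi C = 1/2 \<longleftrightarrow> (\<forall>u\<in>{0..1}. \<forall>v\<in>{0..1}. C u v = Csharp u v)))"
  using is_copula_Csharp psi_Csharp xi_Csharp xi_ge_half eq_Csharp_if_xi_eq_half
    xi_eq_half_if_eq_Csharp
  by blast

end
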